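(* Let $\varrho>1$ and $\widetilde{\sigma}_e^2>0$, and put $\check{x}=\widetilde{\sigma}_e^2/\varrho$, $\hat{x}=\varrho\,\widetilde{\sigma}_e^2$. Let $\sigma_e^2$ be a random variable with probability density $f_{\sigma_e^2}(x)=\frac{1}{2x\ln(\varrho)}$ for $x\in[\check{x},\hat{x}]$ (and $0$ otherwise). Let $P_0>0$, $\eta>0$, $\kappa\in(0,1)$, $\zeta\in(0,1]$, $\alpha>0$, let $d_{p_T}^e,d_{p_T}^b,d_b^e>0$ and $g_b^e\in\mathbb{C}$ be fixed, and set $$|h_{f_T}^b|^2=\eta\,(d_{p_T}^b)^{-2},\qquad |h_b^e|^2=\eta\,(d_b^e)^{-\alpha}|g_b^e|^2,$$ $$\Delta_1=P_0\,\eta\,(d_{p_T}^e)^{-2},\qquad \Delta_2=\Delta_1+\zeta\kappa P_0\,|h_{f_T}^b|^2|h_b^e|^2 .$$ For a threshold $\Gamma_{\text{th}}\in\mathbb{R}$ define the false-alarm probability $\mathcal{P}_f(\Gamma_{\text{th}})=\mathbb{P}(\Delta_1+\sigma_e^2\ge\Gamma_{\text{th}})$, the miss-detection probability $\mathcal{P}_m(\Gamma_{\text{th}})=\mathbb{P}(\Delta_2+\sigma_e^2\le\Gamma_{\text{th}})$, and the total detection error probability $\mathcal{P}_{\text{total}}(\Gamma_{\text{th}})=\mathcal{P}_f(\Gamma_{\text{th}})+\mathcal{P}_m(\Gamma_{\text{th}})$. Assume $\Delta_2-\Delta_1\le\hat{x}-\check{x}$. Then $\Gamma_{\text{th}}^*=\check{x}+\Delta_2$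 minimizes $\mathcal{P}_{\text{total}}$ over $\Gamma_{\text{th}}\in\mathbb{R}$, and the minimum value is $$\mathcal{P}_{\text{total}}^*=\frac{1}{2\ln(\varrho)}\ln\!\left(\frac{\hat{x}}{\check{x}+\zeta\kappa P_0\,|h_{f_T}^b|^2\,|h_b^e|^2}\right).$$
   Context: This models an eavesdropper performing energy detection: it compares its received power $\Delta_i+\sigma_e^2$ ($i=1$ under the hypothesis that the backscatter device is silent, $i=2$ when it transmits) with a threshold $\Gamma_{\text{th}}$. The noise power $\sigma_e^2$ is uncertain: in dB it is uniform on $[\widetilde{\sigma}^2_{e,\text{dB}}-\varrho_{\text{dB}},\widetilde{\sigma}^2_{e,\text{dB}}+\varrho_{\text{dB}}]$, which gives the stated density on $[\check{x},\hat{x}]$. Here $\zeta$ is the backscattering efficiency, $\kappa$ the reflected power fraction, $P_0$ the transmit power, $\eta$ the reference path loss, $d$'s are distances, $\alpha$ the path-loss exponent and $g_b^e$ the small-scale fading coefficient of the device-to-eavesdropper link. *)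

theory Defs
  imports "HOL-Probability.Probability"
begin

definition noise_density :: "real \<Rightarrow> real \<Rightarrow> real \<Rightarrow> real" where
  "noise_density rho s x = (if s / rho \<le> x \<and> x \<le> rho * s then 1 / (2 * x * ln rho) else 0)"

definition P_f :: "'a measure \<Rightarrow> ('a \<Rightarrow> real) \<Rightarrow> real \<Rightarrow> real \<Rightarrow> real" where
  "P_f M X D1 \<Gamma> = measure M {\<omega> \<in> space M. D1 + X \<omega> \<ge> \<Gamma>}"

definition P_m :: "'a measure \<Rightarrow> ('a \<Rightarrow> real) \<Rightarrow> real \<Rightarrow> real \<Rightarrow> real" where
  "P_m M X D2 \<Gamma> = measure M {\<omega> \<in> space M. D2 + X \<omega> \<le> \<Gamma>}"

definition P_total :: "'a measure \<Rightarrow> ('a \<Rightarrow> real) \<Rightarrow> real \<Rightarrow> real \<Rightarrow> real \<Rightarrow> real" where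
  "P_total M X D1 D2 \<Gamma> = P_f M X D1 \<Gamma> + P_m M X D2 \<Gamma>"

end

theory Submission
  imports Defs
begin

text \<open>The noise power is log-uniform: \<open>ln \<sigma>\<^sub>e\<^sup>2\<close> is uniform, so its distribution function is
  affine in \<open>ln x\<close>. Writing \<open>F\<close> for it and \<open>c = \<Delta>\<^sub>2 - \<Delta>\<^sub>1\<close>, the total error at threshold \<open>\<Gamma>\<close> is
  \<open>1 - (F (t + c) - F t)\<close> with \<open>t = \<Gamma> - \<Delta>\<^sub>2\<close>, i.e. one minus the mass of a window of length \<open>c\<close>.
  Since the density \<open>1/x\<close> decreases, the heaviest window is the one starting at the lower end of the support.\<close>

definition log_uniform_density :: "real \<Rightarrow> real \<Rightarrow> real \<Rightarrow> real" where
  "log_uniform_density a b x = (if a \<le> x \<and> x \<le> b then 1 / (x * (ln b - ln a)) else 0)"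

definition log_uniform_cdf :: "real \<Rightarrow> real \<Rightarrow> real \<Rightarrow> real" where
  "log_uniform_cdf a b y = (ln (max a (min y b)) - ln a) / (ln b - ln a)"

lemma noise_density_eq_log_uniform_density:
  assumes "rho > 1" "s > 0"
  shows "noise_density rho s = log_uniform_density (s / rho) (rho * s)"
proof -
  have "ln (rho * s) - ln (s / rho) = 2 * ln rho"
    using assms by (simp add: ln_mult ln_div)
  then show ?thesis
    by (simp add: fun_eq_iff noise_density_def log_uniform_density_def mult.commute mult.left_commute)
qed

lemma has_integral_inverse:
  fixes p q :: real
  assumes "0 < p" "p \<le> q"
  shows "((\<lambda>x. 1 / x) has_integral (ln q - ln p)) {p..q}"
proof (rule fundamental_theorem_of_calculus[OF assms(2)])
  fix x assume "x \<in> {p..q}"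
  then have "x > 0" using assms by auto
  then show "(ln has_vector_derivative 1 / x) (at x within {p..q})"
    by (auto intro!: has_field_derivative_at_within DERIV_ln
        simp: has_real_derivative_iff_has_vector_derivative[symmetric] divide_inverse)
qed

lemma prob_log_uniform_interval:
  assumes X: "distributed M lborel X (\<lambda>x. ennreal (log_uniform_density a b x))"
    and "0 < a" "a < b" "a \<le> p" "p \<le> q" "q \<le> b"
    and A: "A \<in> sets borel"
    and A_ae: "AE x in lborel. (x \<in> A \<and> a \<le> x \<and> x \<le> b) \<longleftrightarrow> p \<le> x \<and> x \<le> q"
  shows "measure M (X -` A \<inter> space M) = (ln q - ln p) / (ln b - ln a)"
proof -
  define L where "L = ln b - ln a"
  have "L > 0" using assms(2,3) by (simp add: L_def)
  have "((\<lambda>x. 1 / x / L) has_integral ((ln q - ln p) / L)) {p..q}"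
    using has_integral_inverse[of p q] assms(2,4,5) by (intro has_integral_divide) auto
  then have I: "(\<integral>\<^sup>+x. ennreal (1 / (x * L)) * indicator {p..q} x \<partial>lborel) = ennreal ((ln q - ln p) / L)"
    using \<open>L > 0\<close> assms(2,4) by (intro nn_integral_has_integral_lebesgue') auto
  have "emeasure M (X -` A \<inter> space M) = (\<integral>\<^sup>+x. ennreal (log_uniform_density a b x) * indicator A x \<partial>lborel)"
    using distributed_emeasure[OF X] A by simp
  also have "\<dots> = (\<integral>\<^sup>+x. ennreal (1 / (x * L)) * indicator {p..q} x \<partial>lborel)"
    using A_ae assms(4,6)
    by (intro nn_integral_cong_AE) (auto elim!: eventually_mono
        simp: log_uniform_density_def L_def indicator_def)
  finally show ?thesis
    using I \<open>L > 0\<close> assms(2,4,5) by (simp add: measure_def L_def)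
qed

lemma prob_log_uniform_atMost:
  assumes X: "distributed M lborel X (\<lambda>x. ennreal (log_uniform_density a b x))"
    and "0 < a" "a < b"
  shows "measure M (X -` {..y} \<inter> space M) = log_uniform_cdf a b y"
  unfolding log_uniform_cdf_def
  using assms
  by (intro prob_log_uniform_interval eventually_mono[OF AE_lborel_singleton[of a]]) auto

lemma prob_log_uniform_atLeast:
  assumes X: "distributed M lborel X (\<lambda>x. ennreal (log_uniform_density a b x))"
    and "0 < a" "a < b"
  shows "measure M (X -` {y..} \<inter> space M) = 1 - log_uniform_cdf a b y"
proof -
  have "measure M (X -` {y..} \<inter> space M) = (ln b - ln (max a (min y b))) / (ln b - ln a)"
    using assms
    by (intro prob_log_uniform_interval eventually_mono[OF AE_lborel_singleton[of b]]) auto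
  moreover have "ln a < ln b" using assms(2,3) by simp
  ultimately show ?thesis by (simp add: log_uniform_cdf_def field_simps)
qed

lemma log_uniform_cdf_eq:
  assumes "a \<le> y" "y \<le> b"
  shows "log_uniform_cdf a b y = (ln y - ln a) / (ln b - ln a)"
  using assms by (simp add: log_uniform_cdf_def)

text \<open>Clamping to \<open>[a, b]\<close> is monotone and 1-Lipschitz, so the clamped endpoints \<open>u \<le> v\<close>
  of the window satisfy \<open>v \<le> u + c\<close>, whence \<open>v / u \<le> (u + c) / u \<le> (a + c) / a\<close> as \<open>u \<ge> a\<close>.\<close>
lemma log_uniform_cdf_window_le:
  assumes "0 < a" "a < b" "0 \<le> c"
  shows "log_uniform_cdf a b (t + c) - log_uniform_cdf a b t \<le> log_uniform_cdf a b (a + c)"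
proof -
  define u where "u = max a (min t b)"
  define v where "v = max a (min (t + c) b)"
  have "a \<le> u" "v \<le> u + c" "0 < v" "v \<le> b" using assms by (auto simp: u_def v_def)
  have "v * a \<le> (u + c) * a" using \<open>v \<le> u + c\<close> assms(1) by (simp add: mult_right_mono)
  also have "\<dots> \<le> u * (a + c)" using \<open>a \<le> u\<close> assms(3) mult_left_mono[of a u c]
    by (simp add: algebra_simps)
  finally have "ln (v * a) \<le> ln (u * (a + c))"
    using \<open>0 < v\<close> \<open>a \<le> u\<close> assms by (subst ln_le_cancel_iff) auto
  then have "ln v - ln u \<le> ln (a + c) - ln a"
    using \<open>0 < v\<close> \<open>a \<le> u\<close> assms by (simp add: ln_mult)
  moreover have "ln v - ln u \<le> ln b - ln a"
    using \<open>0 < v\<close> \<open>v \<le> b\<close> \<open>a \<le> u\<close> assms(1) by (simp add: diff_mono)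
  ultimately have "ln v - ln u \<le> ln (max a (min (a + c) b)) - ln a"
    using assms by (cases "a + c \<le> b") auto
  then show ?thesis
    using assms
    by (simp add: log_uniform_cdf_def u_def v_def divide_right_mono diff_divide_distrib[symmetric])
qed

lemma P_total_log_uniform:
  assumes X: "distributed M lborel X (\<lambda>x. ennreal (log_uniform_density a b x))"
    and "0 < a" "a < b"
  shows "P_total M X D1 D2 \<Gamma> = 1 - (log_uniform_cdf a b (\<Gamma> - D1) - log_uniform_cdf a b (\<Gamma> - D2))"
proof -
  have "{\<omega> \<in> space M. D1 + X \<omega> \<ge> \<Gamma>} = X -` {\<Gamma> - D1..} \<inter> space M"
    and "{\<omega> \<in> space M. D2 + X \<omega> \<le> \<Gamma>} = X -` {..\<Gamma> - D2} \<inter> space M"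
    by auto
  then show ?thesis
    using prob_log_uniform_atLeast[OF assms] prob_log_uniform_atMost[OF assms]
    by (simp add: P_total_def P_f_def P_m_def)
qed

theorem lemma1:
  fixes M :: "'a measure" and X :: "'a \<Rightarrow> real"
    and rho s P0 \<eta> \<kappa> \<zeta> \<alpha> d_pe d_pb d_be h_fb h_be D1 D2 :: real and g :: complex
  assumes "prob_space M"
    and "rho > 1" and "s > 0"
    and "distributed M lborel X (\<lambda>x. ennreal (noise_density rho s x))"
    and "P0 > 0" and "\<eta> > 0" and "0 < \<kappa>" and "\<kappa> < 1" and "0 < \<zeta>" and "\<zeta> \<le> 1"
    and "\<alpha> > 0" and "d_pe > 0" and "d_pb > 0" and "d_be > 0"
  assumes "h_fb = \<eta> * d_pb powr (-2)"
    and "h_be = \<eta> * d_be powr (-\<alpha>) * (cmod g)\<^sup>2"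
    and "D1 = P0 * \<eta> * d_pe powr (-2)"
    and "D2 = D1 + \<zeta> * \<kappa> * P0 * h_fb * h_be"
    and "D2 - D1 \<le> rho * s - s / rho"
  shows "(\<forall>\<Gamma>::real. P_total M X D1 D2 (s / rho + D2) \<le> P_total M X D1 D2 \<Gamma>)
         \<and> P_total M X D1 D2 (s / rho + D2)
             = 1 / (2 * ln rho) * ln ((rho * s) / (s / rho + \<zeta> * \<kappa> * P0 * h_fb * h_be))"
proof -
  define a where "a = s / rho"
  define b where "b = rho * s"
  define c where "c = \<zeta> * \<kappa> * P0 * h_fb * h_be"
  define F where "F = log_uniform_cdf a b"
  have "0 < a" "a < b" "ln b - ln a = 2 * ln rho"
    using assms(2,3) by (auto simp: a_def b_def ln_mult ln_div divide_less_eq less_1_mult)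
  have "0 \<le> c" "a + c \<le> b" "D2 = D1 + c"
    using assms(5-7,9,15,16,18,19) by (simp_all add: a_def b_def c_def)
  have X: "distributed M lborel X (\<lambda>x. ennreal (log_uniform_density a b x))"
    using assms(4) noise_density_eq_log_uniform_density[OF assms(2,3)] by (simp add: a_def b_def)
  have P_total: "P_total M X D1 D2 \<Gamma> = 1 - (F ((\<Gamma> - D2) + c) - F (\<Gamma> - D2))" for \<Gamma>
    using P_total_log_uniform[OF X \<open>0 < a\<close> \<open>a < b\<close>] \<open>D2 = D1 + c\<close> by (simp add: F_def)
  have optimum: "P_total M X D1 D2 (a + D2) = 1 - F (a + c)"
    using \<open>0 \<le> c\<close> \<open>a < b\<close> by (simp add: P_total F_def log_uniform_cdf_eq)
  have window: "F ((\<Gamma> - D2) + c) - F (\<Gamma> - D2) \<le> F (a + c)" for \<Gamma>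
    using log_uniform_cdf_window_le[OF \<open>0 < a\<close> \<open>a < b\<close> \<open>0 \<le> c\<close>] by (simp add: F_def)
  have "1 - F (a + c) = 1 / (2 * ln rho) * ln (b / (a + c))"
    using \<open>0 < a\<close> \<open>0 \<le> c\<close> \<open>a + c \<le> b\<close> \<open>ln b - ln a = 2 * ln rho\<close> assms(2)
    by (simp add: F_def log_uniform_cdf_eq ln_div field_simps)
  with optimum show ?thesis
    unfolding a_def[symmetric] b_def[symmetric] c_def[symmetric]
    by (metis P_total window diff_left_mono)
qed

end
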